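(* Let $1 \le k < n$ be integers, let $U_1,\ldots,U_n$ be independent uniform random variables on $[0,1]$ with order statistics $U_{n:1} < \cdots < U_{n:n}$, and set $U_{n:0} := 0$. Let $Q_{n,k}$ be the distribution of $Y_{n,k} := n (U_{n:j} - U_{n:j-1})_{j=1}^k$ and let $P_k$ be the $k$-fold product of the standard exponential distribution. Then \[ \rho(Q_{n,k},P_k) \le \begin{cases} \exp\Bigl( \frac{1}{2n} + \frac{1}{4n^2} \Bigr) & \text{if } k=1, \\ \bigl(1 - \frac{k}{n}\bigr)^{-1/2} & \text{in general}. \end{cases} \] In particular, \[ d_{\mathrm{TV}}(Q_{n,k},P_k) \le \begin{cases} \frac{1}{2n} + \frac{1}{4n^2} & \text{if } k=1, \\ 1 - \sqrt{1 - \frac{k}{n}} < \frac{k}{2n-k} & \text{in general}. \end{cases} \]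
   Context: For probability measures $Q,P$ on $(\mathcal{X},\mathcal{A})$: $\rho(Q,P) := \sup_{A \in \mathcal{A}} Q(A)/P(A)$ with conventions $0/0 := 0$, $a/0 := \infty$ for $a>0$; $d_{\mathrm{TV}}(Q,P) := \sup_{A \in \mathcal{A}} |Q(A)-P(A)|$. *)

theory Defs
  imports "HOL-Probability.Probability"
begin

definition ratio_sup :: "'a measure \<Rightarrow> 'a measure \<Rightarrow> ennreal" where
  "ratio_sup Q P = (SUP A \<in> sets P.
     (if emeasure P A = 0 then (if emeasure Q A = 0 then 0 else \<infinity>)
      else emeasure Q A / emeasure P A))"

definition dTV :: "'a measure \<Rightarrow> 'a measure \<Rightarrow> real" where
  "dTV Q P = (SUP A \<in> sets P. \<bar>measure Q A - measure P A\<bar>)"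

definition order_stat :: "nat \<Rightarrow> (nat \<Rightarrow> real) \<Rightarrow> nat \<Rightarrow> real" where
  "order_stat n u j = (if j = 0 then 0 else sort (map u [0..<n]) ! (j - 1))"

(* Y_{n,k} = n (U_{n:j} - U_{n:j-1})_{j=1..k}, component j stored at index j-1 *)
definition Y_spacings :: "nat \<Rightarrow> nat \<Rightarrow> (nat \<Rightarrow> real) \<Rightarrow> (nat \<Rightarrow> real)" where
  "Y_spacings n k u = (\<lambda>j\<in>{..<k}. real n * (order_stat n u (Suc j) - order_stat n u j))"

definition Q_dist :: "nat \<Rightarrow> nat \<Rightarrow> (nat \<Rightarrow> real) measure" where
  "Q_dist n k = distr (PiM {..<n} (\<lambda>_. uniform_measure lborel {0..1::real}))
                      (PiM {..<k} (\<lambda>_. borel)) (Y_spacings n k)"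

definition P_exp :: "nat \<Rightarrow> (nat \<Rightarrow> real) measure" where
  "P_exp k = PiM {..<k} (\<lambda>_. density lborel (exponential_density 1))"

end

theory Submission
  imports Defs
begin

(* Let t list the indices of the k smallest coordinates of u in increasing order. Then Y_{n,k}(u)
   is the vector of n-scaled increments of u_{t_1} <= ... <= u_{t_k}, and the remaining n - k
   coordinates all exceed u_{t_k}. Summing over the n!/(n-k)! injective k-tuples t and using
   exchangeability,
     Q(A) <= n!/(n-k)! * Int 1_A(n Delta x) (1 - x_k)^(n-k) dx   over 0 <= x_1 <= ... <= x_k <= 1.
   As (1 - x)^(n-k) <= (1 - k/n)^(n-k) e^k e^(-n x), and e^(-n x_k) is the product exponential
   density at n Delta x, the substitution y = n Delta x (Jacobian n^(-k)) gives Q(A) <= C P(A) with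
   C = n!/((n-k)! n^k) (1 - k/n)^(n-k) e^k, hence rho <= C and d_TV <= 1 - 1/C. Finally
   C^2 (1 - k/n) is a quotient of two values of the increasing sequence m^(2m+1) e^(-2m) / m!^2,
   so C <= (1 - k/n)^(-1/2); for k = 1 the series of artanh gives the sharper bound. *)

section \<open>Elementary estimates\<close>

lemma artanh_ge_cubic:
  fixes x :: real
  assumes "0 \<le> x" "x < 1"
  shows "x + x ^ 3 / 3 \<le> artanh x"
proof -
  define f where "f y = artanh y - y - y ^ 3 / 3" for y :: real
  have "f 0 \<le> f x"
  proof (rule DERIV_nonneg_imp_nondecreasing[OF assms(1)])
    fix y :: real assume y: "0 \<le> y" "y \<le> x"
    then have y1: "y ^ 2 < 1" using assms by (simp add: abs_square_less_1)
    have "1 / (1 - y ^ 2) - 1 - y ^ 2 = y ^ 4 / (1 - y ^ 2)"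
      using y1 by (simp add: field_simps)
    moreover have "(f has_real_derivative 1 / (1 - y ^ 2) - 1 - y ^ 2) (at y)"
      unfolding f_def using y assms by (auto intro!: derivative_eq_intros)
    ultimately show "\<exists>d. (f has_real_derivative d) (at y) \<and> 0 \<le> d"
      using y1 by auto
  qed
  then show ?thesis by (simp add: f_def)
qed

lemma exp_two_le_one_plus_inverse_pow:
  assumes "p \<ge> 1"
  shows "exp 2 \<le> (1 + 1 / real p) ^ (2 * p + 1)"
proof -
  define x where "x = 1 / (2 * real p + 1)"
  have x: "0 \<le> x" "x < 1" using assms by (auto simp: x_def)
  have p: "real p > 0" "2 * real p + 1 > 0" using assms by auto
  have "(1 + x) / (1 - x) = 1 + 1 / real p"
    using p x_def by (simp add: divide_simps) (auto simp: algebra_simps)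
  then have "ln (1 + 1 / real p) = 2 * artanh x"
    by (simp add: artanh_def)
  also have "2 * artanh x \<ge> 2 * x"
    using artanh_ge_cubic[OF x] zero_le_power[OF x(1), of 3] by linarith
  finally have "2 \<le> real (2 * p + 1) * ln (1 + 1 / real p)"
    by (simp add: x_def field_simps)
  then have "exp 2 \<le> exp (real (2 * p + 1) * ln (1 + 1 / real p))"
    by simp
  also have "\<dots> = (1 + 1 / real p) ^ (2 * p + 1)"
    using p by (simp only: exp_of_nat_mult) (simp add: add_pos_pos)
  finally show ?thesis .
qed

(* the square of Stirling's quotient m^(m+1/2) e^(-m) / m! *)
definition stirling_quotient_sq :: "nat \<Rightarrow> real" where
  "stirling_quotient_sq m = real m ^ (2 * m + 1) / (exp (2 * real m) * fact m ^ 2)"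

lemma mono_stirling_quotient_sq: "mono stirling_quotient_sq"
proof (rule mono_iff_le_Suc[THEN iffD2], intro allI)
  fix m :: nat
  show "stirling_quotient_sq m \<le> stirling_quotient_sq (Suc m)"
  proof (cases "m = 0")
    case True
    then show ?thesis by (simp add: stirling_quotient_sq_def)
  next
    case False
    then have m: "real m > 0" by simp
    have "exp 2 * real m ^ (2 * m + 1) \<le> (1 + 1 / real m) ^ (2 * m + 1) * real m ^ (2 * m + 1)"
      using exp_two_le_one_plus_inverse_pow[of m] False by (intro mult_right_mono) auto
    also have "\<dots> = real (Suc m) ^ (2 * m + 1)"
      using m by (simp flip: power_mult_distrib add: field_simps)
    finally have step: "exp 2 * real m ^ (2 * m + 1) \<le> real (Suc m) ^ (2 * m + 1)" .
    define D where "D = exp (2 * real m) * fact m ^ 2"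
    have D: "D > 0" by (simp add: D_def)
    have "real (Suc m) ^ (2 * Suc m + 1) = real (Suc m) ^ 2 * real (Suc m) ^ (2 * m + 1)"
      by (simp flip: power_add)
    moreover have "fact (Suc m) ^ 2 = real (Suc m) ^ 2 * (fact m ^ 2 :: real)"
      by (simp add: power_mult_distrib)
    moreover have "exp (2 * real (Suc m)) = exp 2 * exp (2 * real m)"
      by (simp flip: exp_add add: distrib_left)
    ultimately have "stirling_quotient_sq (Suc m) = real (Suc m) ^ (2 * m + 1) / (exp 2 * D)"
      unfolding stirling_quotient_sq_def D_def by (simp add: field_simps)
    also have "\<dots> \<ge> exp 2 * real m ^ (2 * m + 1) / (exp 2 * D)"
      using D step by (intro divide_right_mono) auto
    finally show ?thesis
      by (simp add: stirling_quotient_sq_def D_def)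
  qed
qed

definition density_ratio_const :: "nat \<Rightarrow> nat \<Rightarrow> real" where
  "density_ratio_const n k =
     fact n / (fact (n - k) * real n ^ k) * (1 - real k / real n) ^ (n - k) * exp (real k)"

lemma density_ratio_const_sq:
  assumes "k < n"
  shows "density_ratio_const n k ^ 2 * (1 - real k / real n)
           = stirling_quotient_sq (n - k) / stirling_quotient_sq n"
proof -
  define m where "m = n - k"
  have n: "real n > 0" and nkm: "n = k + m" using assms by (auto simp: m_def)
  have t: "1 - real k / real n = real m / real n"
    using n by (simp add: nkm field_simps)
  have C: "density_ratio_const n k = fact n * real m ^ m * exp (real k) / (fact m * real n ^ n)"
    using n unfolding density_ratio_const_def t m_def[symmetric]
    by (simp add: power_divide nkm power_add field_simps)
  have e: "exp (real k) * exp (real k) = exp (2 * real k)"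
    by (simp flip: exp_add)
  have "density_ratio_const n k ^ 2 * (real m / real n)
      = fact n ^ 2 * real m ^ (2 * m + 1) * exp (2 * real k) / (fact m ^ 2 * real n ^ (2 * n + 1))"
    using n e unfolding C
    by (simp add: power_mult_distrib power_divide power_add power_mult field_simps power2_eq_square)
  also have "\<dots> = stirling_quotient_sq m / stirling_quotient_sq n"
    using n by (simp add: stirling_quotient_sq_def nkm exp_add field_simps)
  finally show ?thesis by (simp add: t m_def)
qed

lemma density_ratio_const_le_powr:
  assumes "k < n"
  shows "density_ratio_const n k \<le> (1 - real k / real n) powr (-1/2)"
proof -
  define t where "t = 1 - real k / real n"
  have t: "t > 0" using assms by (simp add: t_def field_simps)
  have "stirling_quotient_sq n > 0"
    using assms by (simp add: stirling_quotient_sq_def)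
  moreover have "stirling_quotient_sq (n - k) \<le> stirling_quotient_sq n"
    by (rule monoD[OF mono_stirling_quotient_sq]) simp
  ultimately have "(density_ratio_const n k * sqrt t) ^ 2 \<le> 1 ^ 2"
    using density_ratio_const_sq[OF assms] t by (simp add: t_def power_mult_distrib)
  then have "density_ratio_const n k * sqrt t \<le> 1"
    by (rule power2_le_imp_le) simp
  then show ?thesis
    using t by (simp add: t_def[symmetric] powr_minus_divide powr_half_sqrt field_simps)
qed

lemma reciprocal_expansion_le:
  fixes q :: real
  assumes "q \<ge> 3"
  shows "1 / q - 1 / (3 * q ^ 2) + 1 / (3 * q ^ 3) \<le> 1 / (q + 1) + 1 / (q + 1) ^ 2"
proof -
  define D where "D = 3 * q ^ 3 * (q + 1) ^ 2"
  have q: "q > 0" using assms by simp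
  then have D: "D > 0" by (simp add: D_def)
  have "(1 / q - 1 / (3 * q ^ 2) + 1 / (3 * q ^ 3)) * D = 3 * q ^ 4 + 5 * q ^ 3 + 2 * q ^ 2 + q + 1"
    using q by (simp add: D_def field_simps power2_eq_square power3_eq_cube power4_eq_xxxx)
  also have "\<dots> \<le> 3 * q ^ 4 + 6 * q ^ 3"
  proof -
    obtain d where "q = 3 + d" "d \<ge> 0"
      using assms by (metis add.commute diff_add_cancel diff_ge_0_iff_ge)
    then show ?thesis by (simp add: algebra_simps power2_eq_square power3_eq_cube power4_eq_xxxx)
  qed
  also have "\<dots> = 3 * q ^ 3 * (q + 1) + 3 * q ^ 3"
    by (simp add: algebra_simps power3_eq_cube power4_eq_xxxx)
  also have "\<dots> = (1 / (q + 1) + 1 / (q + 1) ^ 2) * D"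
  proof -
    have "1 / (q + 1) * D = 3 * q ^ 3 * (q + 1)" "1 / (q + 1) ^ 2 * D = 3 * q ^ 3"
      using q by (simp_all add: D_def power2_eq_square)
    then show ?thesis by (simp add: distrib_right)
  qed
  finally show ?thesis using D by simp
qed

lemma density_ratio_const_one_le:
  assumes "n \<ge> 2"
  shows "density_ratio_const n 1 \<le> exp (1 / (2 * real n) + 1 / (4 * real n ^ 2))"
proof -
  define q where "q = 2 * real n - 1"
  define x where "x = 1 / q"
  have q: "q \<ge> 3" and x: "0 \<le> x" "x < 1" using assms by (auto simp: q_def x_def)
  have n: "real n > 0" using assms by simp
  have "1 - 1 / real n = (1 - x) / (1 + x)"
    using n q by (simp add: x_def q_def field_simps)
  then have "ln (1 - 1 / real n) = - 2 * artanh x"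
    using x by (simp add: artanh_def ln_div)
  also have "\<dots> \<le> - (2 * x + 2 * x ^ 3 / 3)"
    using artanh_ge_cubic[OF x] by simp
  finally have "real (n - 1) * ln (1 - 1 / real n) \<le> real (n - 1) * - (2 * x + 2 * x ^ 3 / 3)"
    by (rule mult_left_mono) simp
  then have "1 + real (n - 1) * ln (1 - 1 / real n) \<le> 1 - real (n - 1) * (2 * x + 2 * x ^ 3 / 3)"
    by (simp add: algebra_simps)
  also have "\<dots> = 1 / q - 1 / (3 * q ^ 2) + 1 / (3 * q ^ 3)"
  proof -
    have nq: "real (n - 1) = (q - 1) / 2"
      using assms by (simp add: q_def of_nat_diff)
    show ?thesis
      unfolding nq x_def using q by (simp add: field_simps power2_eq_square power3_eq_cube)
  qed
  also have "\<dots> \<le> 1 / (2 * real n) + 1 / (4 * real n ^ 2)"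
    using reciprocal_expansion_le[OF q] by (simp add: q_def power2_eq_square)
  finally have "1 + real (n - 1) * ln (1 - 1 / real n) \<le> 1 / (2 * real n) + 1 / (4 * real n ^ 2)" .
  moreover have "density_ratio_const n 1 = exp (1 + real (n - 1) * ln (1 - 1 / real n))"
  proof -
    have "0 < 1 - 1 / real n" using assms by (simp add: field_simps)
    then have "exp (1 + real (n - 1) * ln (1 - 1 / real n)) = exp 1 * (1 - 1 / real n) ^ (n - 1)"
      by (simp only: exp_add exp_of_nat_mult exp_ln)
    then show ?thesis
      using n by (simp add: density_ratio_const_def fact_reduce[of n])
  qed
  ultimately show ?thesis by simp
qed

lemma one_minus_sqrt_one_minus_less:
  fixes t :: real
  assumes "0 < t" "t < 1"
  shows "1 - sqrt (1 - t) < t / (2 - t)"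
proof -
  define s where "s = sqrt (1 - t)"
  have s: "0 < s" "s < 1" "s ^ 2 = 1 - t" using assms by (auto simp: s_def)
  moreover have "s ^ 2 < s" using s(1,2) by (simp add: power2_eq_square)
  ultimately have "2 - t < 1 + s" by simp
  have "1 - s = t / (1 + s)"
    using s by (simp add: field_simps power2_eq_square)
  also have "\<dots> < t / (2 - t)"
    using assms \<open>2 - t < 1 + s\<close> by (intro divide_strict_left_mono) auto
  finally show ?thesis by (simp add: s_def)
qed

(* (1 - s/n)^(n-k) e^s is maximal at s = k *)
lemma one_minus_pow_le_exp:
  fixes n k :: nat and s :: real
  assumes "k < n" "0 \<le> s" "s \<le> real n"
  shows "(1 - s / real n) ^ (n - k) \<le> (1 - real k / real n) ^ (n - k) * exp (real k - s)"
proof -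
  define y where "y = 1 - real k / real n"
  define z where "z = (real k - s) / (real n - real k)"
  have n: "real k < real n" using assms by simp
  have y: "y > 0" using n by (simp add: y_def field_simps)
  have eq: "1 - s / real n = y * (1 + z)"
    using n by (simp add: y_def z_def field_simps)
  have "0 \<le> 1 + z"
    using assms n by (simp add: z_def field_simps)
  then have "(1 + z) ^ (n - k) \<le> exp z ^ (n - k)"
    by (intro power_mono exp_ge_add_one_self)
  also have "exp z ^ (n - k) = exp (real k - s)"
    using n by (simp add: z_def of_nat_diff flip: exp_of_nat_mult)
  finally show ?thesis
    using y unfolding eq y_def[symmetric] power_mult_distrib by (simp add: mult_left_mono)
qed

section \<open>Ratio and total variation under a uniform bound\<close>

lemma ratio_sup_le:
  assumes "\<And>A. A \<in> sets P \<Longrightarrow> emeasure Q A \<le> c * emeasure P A"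
  shows "ratio_sup Q P \<le> c"
  unfolding ratio_sup_def
proof (intro SUP_least)
  fix A assume A: "A \<in> sets P"
  show "(if emeasure P A = 0 then if emeasure Q A = 0 then 0 else \<infinity>
         else emeasure Q A / emeasure P A) \<le> c"
  proof (cases "emeasure P A = 0")
    case True
    then show ?thesis using assms[OF A] by simp
  next
    case False
    have "emeasure Q A / emeasure P A \<le> c"
      using False assms[OF A] by (intro divide_le_posI_ennreal) (simp_all add: mult.commute zero_less_iff_neq_zero)
    with False show ?thesis by simp
  qed
qed

lemma dTV_le:
  assumes "prob_space Q" "prob_space P" "sets Q = sets P"
    and "\<And>A. A \<in> sets P \<Longrightarrow> emeasure Q A \<le> ennreal c * emeasure P A"
  shows "dTV Q P \<le> 1 - 1 / c"
  unfolding dTV_def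
proof (rule cSUP_least)
  interpret Q: prob_space Q by fact
  interpret P: prob_space P by fact
  have space: "space Q = space P"
    using assms(3) by (rule sets_eq_imp_space_eq)
  show "sets P \<noteq> {}" by blast
  have c: "1 \<le> c"
    using assms(4)[OF sets.top] Q.emeasure_space_1 P.emeasure_space_1 space by simp
  have le: "measure Q B \<le> c * measure P B" if "B \<in> sets P" for B
    using assms(4)[OF that] c
    by (simp add: Q.emeasure_eq_measure P.emeasure_eq_measure flip: ennreal_mult)
  have half: "measure Q B - measure P B \<le> 1 - 1 / c" if "B \<in> sets P" for B
  proof -
    have "measure Q B / c \<le> measure P B"
      using le[OF that] c by (simp add: divide_le_eq mult.commute)
    moreover have "measure Q B * (1 - 1 / c) \<le> 1 - 1 / c"
      using c by (intro mult_left_le_one_le) (auto simp: field_simps)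
    ultimately show ?thesis by (simp add: algebra_simps)
  qed
  fix A assume A: "A \<in> sets P"
  have "measure Q (space P - A) = 1 - measure Q A" "measure P (space P - A) = 1 - measure P A"
    using Q.prob_compl[of A] P.prob_compl[OF A] A assms(3) space by simp_all
  then show "\<bar>measure Q A - measure P A\<bar> \<le> 1 - 1 / c"
    using half[OF A] half[of "space P - A"] A by auto
qed

section \<open>Order statistics and scaled increments\<close>

lemma sort_map_eq_map_sort_key: "sort (map f xs) = map f (sort_key f xs)"
  by (rule properties_for_sort) simp_all

lemma sorted_nth_le_iff:
  fixes ys :: "'a::linorder list"
  assumes "sorted ys" "j < length ys"
  shows "ys ! j \<le> a \<longleftrightarrow> j < length (filter (\<lambda>x. x \<le> a) ys)"
  using assms
proof (induction ys arbitrary: j)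
  case (Cons y ys)
  show ?case
  proof (cases "y \<le> a")
    case True
    then show ?thesis using Cons by (cases j) auto
  next
    case False
    moreover have "y \<le> (y # ys) ! j"
      using Cons.prems by (cases j) auto
    moreover have "filter (\<lambda>x. x \<le> a) (y # ys) = []"
      using False Cons.prems(1) by (auto simp: filter_empty_conv)
    ultimately show ?thesis by simp
  qed
qed simp

lemma sort_nth_le_iff_count:
  fixes u :: "nat \<Rightarrow> real"
  assumes "j < n"
  shows "sort (map u [0..<n]) ! j \<le> a \<longleftrightarrow> real j < (\<Sum>i<n. if u i \<le> a then 1 else 0)"
proof -
  have "length (filter (\<lambda>x. x \<le> a) (sort (map u [0..<n])))
      = length (filter (\<lambda>x. x \<le> a) (map u [0..<n]))"
    by (metis mset_filter mset_sort size_mset)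
  also have "\<dots> = card {i \<in> {..<n}. u i \<le> a}"
    by (simp add: length_filter_conv_card) (intro arg_cong[where f = card]; auto)
  finally show ?thesis
    using assms by (simp add: sorted_nth_le_iff sum.If_cases Int_def)
qed

lemma order_stat_measurable [measurable]:
  "(\<lambda>u. order_stat n u j) \<in> borel_measurable (PiM {..<n} (\<lambda>_. borel))"
proof (cases "j = 0 \<or> n < j")
  case True
  moreover have "sort (map u [0..<n]) ! (j - 1) = [] ! (j - 1 - n)" if "n < j" for u
    using nth_append[of "sort (map u [0..<n])" "[]" "j - 1"] that by simp
  ultimately have "order_stat n u j = (if j = 0 then 0 else [] ! (j - 1 - n))" for u
    by (auto simp: order_stat_def)
  then show ?thesis by simp
next
  case False
  then have j: "j - 1 < n" by arith
  show ?thesis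
  proof (rule borel_measurableI_le)
    fix a :: real
    let ?M = "PiM {..<n} (\<lambda>_. borel :: real measure)"
    have "{u \<in> space ?M. order_stat n u j \<le> a}
        = {u \<in> space ?M. real (j - 1) < (\<Sum>i<n. if u i \<le> a then 1 else 0)}"
      unfolding order_stat_def using False sort_nth_le_iff_count[OF j] by auto
    also have "\<dots> \<in> sets ?M" by measurable
    finally show "{u \<in> space ?M. order_stat n u j \<le> a} \<in> sets ?M" .
  qed
qed

definition scaled_increments :: "real \<Rightarrow> nat \<Rightarrow> (nat \<Rightarrow> real) \<Rightarrow> (nat \<Rightarrow> real)" where
  "scaled_increments c k x = (\<lambda>j\<in>{..<k}. c * (x j - (if j = 0 then 0 else x (j - 1))))"

lemma scaled_increments_measurable:
  assumes "{..<k} \<subseteq> I"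
  shows "scaled_increments c k \<in> measurable (PiM I (\<lambda>_. borel)) (PiM {..<k} (\<lambda>_. borel))"
  unfolding scaled_increments_def
proof (rule measurable_restrict)
  fix j assume j: "j \<in> {..<k}"
  then have [measurable]: "j \<in> I" "j - 1 \<in> I" using assms by auto
  show "(\<lambda>x. c * (x j - (if j = 0 then 0 else x (j - 1)))) \<in> borel_measurable (PiM I (\<lambda>_. borel))"
    by measurable
qed

lemma scaled_increments_measurable_lborel [measurable]:
  "scaled_increments c k \<in> measurable (PiM {..<k} (\<lambda>_. lborel)) (PiM {..<k} (\<lambda>_. lborel))"
  using scaled_increments_measurable[of k "{..<k}" c]
  by (simp cong: measurable_cong_sets sets_PiM_cong)

lemma scaled_increments_cong:
  "(\<And>i. i < k \<Longrightarrow> x i = y i) \<Longrightarrow> scaled_increments c k x = scaled_increments c k y"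
  unfolding scaled_increments_def by (intro restrict_ext) auto

lemma scaled_increments_Suc_fun_upd:
  "scaled_increments c (Suc k) (x(k := y))
     = (scaled_increments c k x)(k := c * (y - (if k = 0 then 0 else x (k - 1))))"
  unfolding scaled_increments_def by (rule ext) auto

lemma sum_scaled_increments:
  "(\<Sum>j<Suc k. scaled_increments c (Suc k) x j) = c * x k"
proof (induction k)
  case (Suc k)
  have "(\<Sum>j<Suc k. scaled_increments c (Suc (Suc k)) x j) = (\<Sum>j<Suc k. scaled_increments c (Suc k) x j)"
    by (intro sum.cong) (auto simp: scaled_increments_def)
  with Suc show ?case
    by (simp add: scaled_increments_def algebra_simps)
qed (simp add: scaled_increments_def)

lemma nn_integral_lborel_scaled_shift:
  fixes c a :: real
  assumes "c > 0" and [measurable]: "g \<in> borel_measurable borel"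
  shows "(\<integral>\<^sup>+ y. g (c * (y - a)) \<partial>lborel) = ennreal (1 / c) * (\<integral>\<^sup>+ z. g z \<partial>lborel)"
proof -
  have "(\<integral>\<^sup>+ z. g z \<partial>lborel) = ennreal c * (\<integral>\<^sup>+ y. g (- c * a + c * y) \<partial>lborel)"
    using nn_integral_real_affine[of g c "- c * a"] assms by simp
  moreover have "ennreal (1 / c) * ennreal c = 1"
    using assms by (simp flip: ennreal_mult)
  ultimately show ?thesis
    by (simp add: mult.assoc[symmetric] algebra_simps)
qed

lemma borel_measurable_nn_integral_fun_upd:
  assumes "F \<in> borel_measurable (PiM (insert k I) (\<lambda>_. M))" "sigma_finite_measure M"
  shows "(\<lambda>w. \<integral>\<^sup>+ z. F (w(k := z)) \<partial>M) \<in> borel_measurable (PiM I (\<lambda>_. M))"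
proof -
  have "F \<circ> (\<lambda>(w, z). w(k := z)) \<in> borel_measurable (PiM I (\<lambda>_. M) \<Otimes>\<^sub>M M)"
    using measurable_comp[OF measurable_add_dim assms(1)] .
  moreover have "F \<circ> (\<lambda>(w, z). w(k := z)) = (\<lambda>(w, z). F (w(k := z)))" by auto
  ultimately show ?thesis
    by (simp add: sigma_finite_measure.borel_measurable_nn_integral[OF assms(2)])
qed

lemma nn_integral_scaled_increments:
  fixes c :: real
  assumes "c > 0" and "F \<in> borel_measurable (PiM {..<k} (\<lambda>_. lborel))"
  shows "(\<integral>\<^sup>+ x. F (scaled_increments c k x) \<partial>PiM {..<k} (\<lambda>_. lborel))
           = ennreal ((1 / c) ^ k) * (\<integral>\<^sup>+ y. F y \<partial>PiM {..<k} (\<lambda>_. lborel))"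
  using assms(2)
proof (induction k arbitrary: F)
  case 0
  have "scaled_increments c 0 x = x" if "x \<in> space (PiM {..<0} (\<lambda>_. lborel))" for x
    using that by (auto simp: space_PiM_empty scaled_increments_def restrict_def)
  then have "(\<integral>\<^sup>+ x. F (scaled_increments c 0 x) \<partial>PiM {..<0} (\<lambda>_. lborel))
      = (\<integral>\<^sup>+ x. F x \<partial>PiM {..<0} (\<lambda>_. lborel))"
    by (intro nn_integral_cong) simp
  then show ?case by simp
next
  case (Suc k)
  interpret product_sigma_finite "\<lambda>_::nat. lborel"
    by (simp add: product_sigma_finite_def lborel.sigma_finite_measure_axioms)
  let ?L = "\<lambda>k. PiM {..<k} (\<lambda>_::nat. lborel :: real measure)"
  have ins: "{..<Suc k} = insert k {..<k}" by auto
  note F[measurable] = Suc.prems[unfolded ins]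
  define h where "h w = (\<integral>\<^sup>+ z. F (w(k := z)) \<partial>lborel)" for w
  have h[measurable]: "h \<in> borel_measurable (?L k)"
    unfolding h_def using F lborel.sigma_finite_measure_axioms by (rule borel_measurable_nn_integral_fun_upd)
  have "(\<integral>\<^sup>+ x. F (scaled_increments c (Suc k) x) \<partial>?L (Suc k))
      = (\<integral>\<^sup>+ x. (\<integral>\<^sup>+ y. F (scaled_increments c (Suc k) (x(k := y))) \<partial>lborel) \<partial>?L k)"
    using measurable_comp[OF scaled_increments_measurable_lborel Suc.prems]
    unfolding ins by (intro product_nn_integral_insert) (auto simp: comp_def)
  also have "\<dots> = (\<integral>\<^sup>+ x. ennreal (1 / c) * h (scaled_increments c k x) \<partial>?L k)"
  proof (rule nn_integral_cong)
    fix x assume x: "x \<in> space (?L k)"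
    have "scaled_increments c k x \<in> space (?L k)"
      by (rule measurable_space[OF scaled_increments_measurable_lborel x])
    then have [measurable]: "(\<lambda>z. F ((scaled_increments c k x)(k := z))) \<in> borel_measurable borel"
      by measurable
    show "(\<integral>\<^sup>+ y. F (scaled_increments c (Suc k) (x(k := y))) \<partial>lborel)
        = ennreal (1 / c) * h (scaled_increments c k x)"
      unfolding scaled_increments_Suc_fun_upd h_def
      by (rule nn_integral_lborel_scaled_shift[OF assms(1)]) measurable
  qed
  also have "\<dots> = ennreal (1 / c) * ennreal ((1 / c) ^ k) * (\<integral>\<^sup>+ w. h w \<partial>?L k)"
    by (simp add: nn_integral_cmult Suc.IH[OF h] mult.assoc)
  also have "(\<integral>\<^sup>+ w. h w \<partial>?L k) = (\<integral>\<^sup>+ y. F y \<partial>?L (Suc k))"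
    unfolding ins h_def by (rule product_nn_integral_insert[symmetric]) auto
  finally show ?case
    using assms(1) by (simp add: mult.assoc[symmetric] flip: ennreal_mult)
qed

section \<open>Product measures with densities\<close>

abbreviation uniform01 :: "real measure" where
  "uniform01 \<equiv> uniform_measure lborel {0..1}"

lemma prob_space_uniform01: "prob_space uniform01"
  by (rule prob_space_uniform_measure) simp_all

lemma uniform01_eq_density: "uniform01 = density lborel (indicator {0..1})"
  by (simp add: uniform_measure_def divide_ennreal_def)

lemma emeasure_uniform01_atLeast: "emeasure uniform01 {a..} = ennreal (max 0 (min 1 (1 - a)))"
proof -
  have "{0..1} \<inter> {a..} = {max 0 a..1::real}" by auto
  then show ?thesis
    by (simp add: divide_ennreal_def emeasure_lborel_Icc_eq max_def min_def)
qed

lemma sets_PiM_uniform01: "sets (PiM I (\<lambda>_. uniform01)) = sets (PiM I (\<lambda>_. borel))"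
  by (intro sets_PiM_cong) simp_all

lemma indicator_PiE_eq_prod:
  "finite I \<Longrightarrow> x \<in> extensional I \<Longrightarrow> indicator (PiE I A) x = (\<Prod>i\<in>I. indicator (A i) (x i) :: ennreal)"
  by (auto simp: indicator_def PiE_def Pi_def)

lemma PiM_density_lborel:
  fixes f :: "real \<Rightarrow> ennreal"
  assumes [measurable]: "f \<in> borel_measurable borel" and "finite I"
    and "prob_space (density lborel f)"
  shows "PiM I (\<lambda>_. density lborel f) = density (PiM I (\<lambda>_. lborel)) (\<lambda>x. \<Prod>i\<in>I. f (x i))"
proof -
  interpret D: product_sigma_finite "\<lambda>_. density lborel f"
    using assms(3) by (simp add: product_sigma_finite_def prob_space_imp_sigma_finite)
  interpret L: product_sigma_finite "\<lambda>_. lborel"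
    by (simp add: product_sigma_finite_def lborel.sigma_finite_measure_axioms)
  show ?thesis
  proof (rule D.PiM_eqI[OF assms(2), symmetric])
    show "sets (density (PiM I (\<lambda>_. lborel)) (\<lambda>x. \<Prod>i\<in>I. f (x i))) = sets (PiM I (\<lambda>_. density lborel f))"
      by (subst sets_density) (intro sets_PiM_cong; simp)
  next
    fix A assume "\<And>i. i \<in> I \<Longrightarrow> A i \<in> sets (density lborel f)"
    then have A[measurable]: "\<And>i. i \<in> I \<Longrightarrow> A i \<in> sets borel" by simp
    have "emeasure (density (PiM I (\<lambda>_. lborel)) (\<lambda>x. \<Prod>i\<in>I. f (x i))) (PiE I A)
        = (\<integral>\<^sup>+ x. (\<Prod>i\<in>I. f (x i)) * indicator (PiE I A) x \<partial>PiM I (\<lambda>_. lborel))"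
      by (subst emeasure_density) (auto intro!: sets_PiM_I_finite assms(2))
    also have "\<dots> = (\<integral>\<^sup>+ x. (\<Prod>i\<in>I. f (x i) * indicator (A i) (x i)) \<partial>PiM I (\<lambda>_. lborel))"
      by (intro nn_integral_cong) (auto simp: indicator_PiE_eq_prod space_PiM PiE_iff prod.distrib assms(2))
    also have "\<dots> = (\<Prod>i\<in>I. \<integral>\<^sup>+ y. f y * indicator (A i) y \<partial>lborel)"
      by (rule L.product_nn_integral_prod) (auto simp: assms(2))
    also have "\<dots> = (\<Prod>i\<in>I. emeasure (density lborel f) (A i))"
      by (intro prod.cong refl) (simp add: emeasure_density)
    finally show "emeasure (density (PiM I (\<lambda>_. lborel)) (\<lambda>x. \<Prod>i\<in>I. f (x i))) (PiE I A)
        = (\<Prod>i\<in>I. emeasure (density lborel f) (A i))" .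
  qed
qed

lemma P_exp_eq_density:
  "P_exp k = density (PiM {..<k} (\<lambda>_. lborel)) (\<lambda>y. \<Prod>j<k. ennreal (exponential_density 1 (y j)))"
  unfolding P_exp_def
  by (rule PiM_density_lborel) (simp_all add: prob_space_exponential_density)

lemma PiM_uniform01_eq_density:
  "PiM {..<k::nat} (\<lambda>_. uniform01) = density (PiM {..<k} (\<lambda>_. lborel)) (\<lambda>x. \<Prod>i<k. indicator {0..1} (x i))"
  using prob_space_uniform01 unfolding uniform01_eq_density
  by (intro PiM_density_lborel) simp_all

lemma prob_space_P_exp: "prob_space (P_exp k)"
  unfolding P_exp_def by (simp add: prob_space_PiM prob_space_exponential_density)

lemma sets_P_exp: "sets (P_exp k) = sets (PiM {..<k} (\<lambda>_. borel))"
  unfolding P_exp_def by (intro sets_PiM_cong) simp_all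

lemma Y_spacings_eq_scaled_increments:
  "Y_spacings n k u = scaled_increments (real n) k (\<lambda>i. order_stat n u (Suc i))"
  unfolding Y_spacings_def scaled_increments_def
  by (intro restrict_ext) (auto simp: order_stat_def)

lemma Y_spacings_measurable:
  "Y_spacings n k \<in> measurable (PiM {..<n} (\<lambda>_. uniform01)) (PiM {..<k} (\<lambda>_. borel))"
proof -
  have "Y_spacings n k \<in> measurable (PiM {..<n} (\<lambda>_. borel)) (PiM {..<k} (\<lambda>_. borel))"
    unfolding Y_spacings_def by (rule measurable_restrict) measurable
  then show ?thesis by (simp cong: measurable_cong_sets add: sets_PiM_uniform01)
qed

lemma prob_space_Q_dist: "prob_space (Q_dist n k)"
  unfolding Q_dist_def
  by (intro prob_space.prob_space_distr prob_space_PiM prob_space_uniform01 Y_spacings_measurable)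

lemma sets_Q_dist: "sets (Q_dist n k) = sets (PiM {..<k} (\<lambda>_. borel))"
  by (simp add: Q_dist_def)

section \<open>Exchangeability and the bound on Q_dist\<close>

definition index_tuples :: "nat \<Rightarrow> nat \<Rightarrow> nat list set" where
  "index_tuples n k = {xs. length xs = k \<and> distinct xs \<and> set xs \<subseteq> {..<n}}"

lemma finite_index_tuples: "finite (index_tuples n k)"
proof (rule finite_subset)
  show "index_tuples n k \<subseteq> {xs. set xs \<subseteq> {..<n} \<and> length xs = k}"
    by (auto simp: index_tuples_def)
qed (simp add: finite_lists_length_eq)

lemma card_index_tuples:
  assumes "k \<le> n"
  shows "real (card (index_tuples n k)) = fact n / fact (n - k)"
proof -
  have "card (index_tuples n k) = \<Prod>{n - k + 1..n}"
    unfolding index_tuples_def using card_lists_distinct_length_eq[of "{..<n}" k] assms by simp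
  moreover have "real (fact n) = real (fact (n - k) * \<Prod>{n - k + 1..n})"
    using fact_eq_fact_times[of "n - k" n] assms by simp
  then have "fact n = fact (n - k) * real (\<Prod>{n - k + 1..n})"
    by (simp only: of_nat_fact of_nat_mult)
  ultimately show ?thesis by simp
qed

definition extend_perm :: "nat \<Rightarrow> nat list \<Rightarrow> nat list" where
  "extend_perm n t = t @ filter (\<lambda>j. j \<notin> set t) [0..<n]"

lemma
  assumes "t \<in> index_tuples n k"
  shows distinct_extend_perm: "distinct (extend_perm n t)"
    and set_extend_perm: "set (extend_perm n t) = {..<n}"
    and length_extend_perm: "length (extend_perm n t) = n"
proof -
  show d: "distinct (extend_perm n t)" and s: "set (extend_perm n t) = {..<n}"
    using assms by (auto simp: extend_perm_def index_tuples_def)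
  show "length (extend_perm n t) = n"
    using distinct_card[OF d] s by simp
qed

lemma extend_perm_nth_less:
  "t \<in> index_tuples n k \<Longrightarrow> i < k \<Longrightarrow> extend_perm n t ! i = t ! i"
  by (auto simp: extend_perm_def index_tuples_def nth_append)

lemma extend_perm_nth_ge:
  assumes t: "t \<in> index_tuples n k" and "k \<le> j" "j < n"
  shows "extend_perm n t ! j \<notin> set t"
proof -
  define F where "F = filter (\<lambda>j. j \<notin> set t) [0..<n]"
  have "length t = k" using t by (simp add: index_tuples_def)
  moreover have "length F = n - k"
    using length_extend_perm[OF t] \<open>length t = k\<close> by (simp add: extend_perm_def F_def)
  ultimately have "extend_perm n t ! j = F ! (j - k)" "F ! (j - k) \<in> set F"
    using assms by (simp_all add: extend_perm_def F_def[symmetric] nth_append)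
  then show ?thesis by (simp add: F_def)
qed

definition permute_coords :: "nat \<Rightarrow> nat list \<Rightarrow> (nat \<Rightarrow> real) \<Rightarrow> (nat \<Rightarrow> real)" where
  "permute_coords n t u = (\<lambda>i\<in>{..<n}. u (extend_perm n t ! i))"

lemma permute_coords_measurable:
  assumes "t \<in> index_tuples n k"
  shows "permute_coords n t \<in> measurable (PiM {..<n} (\<lambda>_. M)) (PiM {..<n} (\<lambda>_. M))"
  unfolding permute_coords_def
proof (rule measurable_restrict)
  fix i assume "i \<in> {..<n}"
  then have "extend_perm n t ! i \<in> {..<n}"
    using set_extend_perm[OF assms] length_extend_perm[OF assms] by (metis lessThan_iff nth_mem)
  then show "(\<lambda>u. u (extend_perm n t ! i)) \<in> measurable (PiM {..<n} (\<lambda>_. M)) M"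
    by (rule measurable_component_singleton)
qed

lemma nn_integral_permute_coords:
  assumes "t \<in> index_tuples n k" "prob_space M"
    and g: "g \<in> borel_measurable (PiM {..<n} (\<lambda>_. M))"
  shows "(\<integral>\<^sup>+ u. g (permute_coords n t u) \<partial>PiM {..<n} (\<lambda>_. M)) = (\<integral>\<^sup>+ u. g u \<partial>PiM {..<n} (\<lambda>_. M))"
proof -
  have "inj_on (\<lambda>i. extend_perm n t ! i) {..<n}"
    using distinct_extend_perm[OF assms(1)] length_extend_perm[OF assms(1)] by (simp add: inj_on_nth)
  moreover have "(\<lambda>i. extend_perm n t ! i) \<in> {..<n} \<rightarrow> {..<n}"
    using set_extend_perm[OF assms(1)] length_extend_perm[OF assms(1)] by (metis Pi_I lessThan_iff nth_mem)
  ultimately have D: "distr (PiM {..<n} (\<lambda>_. M)) (PiM {..<n} (\<lambda>_. M)) (permute_coords n t) = PiM {..<n} (\<lambda>_. M)"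
    unfolding permute_coords_def by (intro distr_PiM_reindex assms(2))
  have "(\<integral>\<^sup>+ u. g (permute_coords n t u) \<partial>PiM {..<n} (\<lambda>_. M))
      = (\<integral>\<^sup>+ u. g u \<partial>distr (PiM {..<n} (\<lambda>_. M)) (PiM {..<n} (\<lambda>_. M)) (permute_coords n t))"
    using permute_coords_measurable[OF assms(1), where M = M] g by (simp add: nn_integral_distr)
  then show ?thesis
    by (simp only: D)
qed

definition sorted_prefix :: "nat \<Rightarrow> (nat \<Rightarrow> real) \<Rightarrow> bool" where
  "sorted_prefix k x \<longleftrightarrow> (\<forall>i\<in>{..<k - 1}. x i \<le> x (Suc i))"

definition lowest_sorted :: "nat \<Rightarrow> nat \<Rightarrow> (nat \<Rightarrow> real) \<Rightarrow> bool" where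
  "lowest_sorted n k v \<longleftrightarrow> sorted_prefix k v \<and> (\<forall>j\<in>{k..<n}. v (k - 1) \<le> v j)"

lemma sorted_prefix_measurable:
  assumes "{..<k} \<subseteq> I"
  shows "Measurable.pred (PiM I (\<lambda>_. borel)) (sorted_prefix k)"
proof -
  have "Measurable.pred (PiM I (\<lambda>_. borel)) (\<lambda>x :: nat \<Rightarrow> real. x i \<le> x (Suc i))" if "i \<in> {..<k - 1}" for i
  proof -
    have "i \<in> I" "Suc i \<in> I" using that assms by auto
    then show ?thesis unfolding pred_def
      by (intro borel_measurable_le measurable_component_singleton[where M = "\<lambda>_. borel", simplified])
  qed
  then show ?thesis
    unfolding sorted_prefix_def by (intro pred_intros_finite) auto
qed

lemma lowest_sorted_measurable:
  assumes "1 \<le> k" "k \<le> n"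
  shows "Measurable.pred (PiM {..<n} (\<lambda>_. borel)) (lowest_sorted n k)"
proof -
  have "Measurable.pred (PiM {..<n} (\<lambda>_. borel)) (\<lambda>v :: nat \<Rightarrow> real. v (k - 1) \<le> v j)" if "j \<in> {k..<n}" for j
  proof -
    have "j \<in> {..<n}" "k - 1 \<in> {..<n}" using that assms by auto
    then show ?thesis unfolding pred_def
      by (intro borel_measurable_le measurable_component_singleton[where M = "\<lambda>_. borel", simplified])
  qed
  then show ?thesis
    unfolding lowest_sorted_def using sorted_prefix_measurable[of k "{..<n}"] assms
    by (intro pred_intros_logic pred_intros_finite) auto
qed

lemma Y_spacings_eq_lowest_sorted:
  assumes "1 \<le> k" "k \<le> n"
  obtains t where "t \<in> index_tuples n k"
    and "Y_spacings n k u = scaled_increments (real n) k (permute_coords n t u)"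
    and "lowest_sorted n k (permute_coords n t u)"
proof
  define \<sigma> where "\<sigma> = sort_key u [0..<n]"
  define t where "t = take k \<sigma>"
  have \<sigma>: "length \<sigma> = n" "distinct \<sigma>" "set \<sigma> = {..<n}" "sorted (map u \<sigma>)"
    by (auto simp: \<sigma>_def)
  show t: "t \<in> index_tuples n k"
    using \<sigma> assms by (auto simp: t_def index_tuples_def dest: in_set_takeD)
  have order_stat: "order_stat n u (Suc i) = u (\<sigma> ! i)" if "i < n" for i
    using that \<sigma> by (simp add: order_stat_def \<sigma>_def sort_map_eq_map_sort_key)
  have perm: "permute_coords n t u i = u (extend_perm n t ! i)" if "i < n" for i
    using that by (simp add: permute_coords_def)
  have perm_less: "permute_coords n t u i = u (\<sigma> ! i)" if "i < k" for i
    using that assms perm[of i] extend_perm_nth_less[OF t that] by (simp add: t_def)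
  have mono: "u (\<sigma> ! i) \<le> u (\<sigma> ! j)" if "i \<le> j" "j < n" for i j
    using \<sigma>(1,4) that by (auto simp: sorted_iff_nth_mono)
  show "Y_spacings n k u = scaled_increments (real n) k (permute_coords n t u)"
    unfolding Y_spacings_eq_scaled_increments
    using assms by (intro scaled_increments_cong) (simp add: order_stat perm_less)
  have "u (\<sigma> ! (k - 1)) \<le> permute_coords n t u j" if j: "j \<in> {k..<n}" for j
  proof -
    obtain p where p: "p < n" "\<sigma> ! p = extend_perm n t ! j"
      using j \<sigma> set_extend_perm[OF t] length_extend_perm[OF t]
      by (metis atLeastLessThan_iff in_set_conv_nth nth_mem)
    have "k \<le> p"
    proof (rule ccontr)
      assume "\<not> k \<le> p"
      then have "\<sigma> ! p \<in> set t" using p \<sigma>(1) by (auto simp: t_def in_set_conv_nth)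
      then show False using p extend_perm_nth_ge[OF t] j by auto
    qed
    then show ?thesis using p j assms by (simp add: perm mono p(2)[symmetric])
  qed
  then show "lowest_sorted n k (permute_coords n t u)"
    using assms by (auto simp: lowest_sorted_def sorted_prefix_def perm_less mono)
qed

definition lowest_indicator :: "nat \<Rightarrow> nat \<Rightarrow> (nat \<Rightarrow> real) set \<Rightarrow> (nat \<Rightarrow> real) \<Rightarrow> ennreal" where
  "lowest_indicator n k A v = (if scaled_increments (real n) k v \<in> A \<and> lowest_sorted n k v then 1 else 0)"

definition prefix_indicator :: "nat \<Rightarrow> nat \<Rightarrow> (nat \<Rightarrow> real) set \<Rightarrow> (nat \<Rightarrow> real) \<Rightarrow> ennreal" where
  "prefix_indicator n k A x = (if scaled_increments (real n) k x \<in> A \<and> sorted_prefix k x then 1 else 0)"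

lemma indicator_Y_spacings_le_sum:
  assumes "1 \<le> k" "k \<le> n"
  shows "indicator A (Y_spacings n k u)
           \<le> (\<Sum>t\<in>index_tuples n k. lowest_indicator n k A (permute_coords n t u))"
proof -
  obtain t where t: "t \<in> index_tuples n k"
    and "Y_spacings n k u = scaled_increments (real n) k (permute_coords n t u)"
    and "lowest_sorted n k (permute_coords n t u)"
    using Y_spacings_eq_lowest_sorted[OF assms] .
  then have "indicator A (Y_spacings n k u) = lowest_indicator n k A (permute_coords n t u)"
    by (simp add: lowest_indicator_def indicator_def)
  also have "\<dots> \<le> (\<Sum>t\<in>index_tuples n k. lowest_indicator n k A (permute_coords n t u))"
    by (rule member_le_sum[OF t _ finite_index_tuples]) simp
  finally show ?thesis .
qed

lemma lowest_indicator_measurable: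
  assumes "1 \<le> k" "k \<le> n" and [measurable]: "A \<in> sets (PiM {..<k} (\<lambda>_. borel))"
  shows "lowest_indicator n k A \<in> borel_measurable (PiM {..<n} (\<lambda>_. uniform01))"
proof -
  have "{..<k} \<subseteq> {..<n}" using assms by auto
  note [measurable] = scaled_increments_measurable[OF this, of "real n"]
    lowest_sorted_measurable[OF assms(1,2)]
  have "lowest_indicator n k A \<in> borel_measurable (PiM {..<n} (\<lambda>_. borel))"
    unfolding lowest_indicator_def using assms by measurable
  then show ?thesis by (simp cong: measurable_cong_sets add: sets_PiM_uniform01)
qed

lemma prefix_indicator_measurable:
  assumes [measurable]: "A \<in> sets (PiM {..<k} (\<lambda>_. borel))"
  shows "prefix_indicator n k A \<in> borel_measurable (PiM {..<k} (\<lambda>_. lborel))"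
proof -
  note [measurable] = scaled_increments_measurable[OF order.refl, where c = "real n" and k = k]
    sorted_prefix_measurable[OF order.refl, where k = k]
  have "prefix_indicator n k A \<in> borel_measurable (PiM {..<k} (\<lambda>_. borel))"
    unfolding prefix_indicator_def by measurable
  then show ?thesis by (simp cong: measurable_cong_sets sets_PiM_cong)
qed

lemma prod_indicator_eq_if:
  "finite J \<Longrightarrow> (\<Prod>j\<in>J. indicator (B j) (y j) :: ennreal) = (if \<forall>j\<in>J. y j \<in> B j then 1 else 0)"
  by (induct J rule: finite_induct) auto

lemma nn_integral_lowest_indicator:
  assumes "1 \<le> k" "k \<le> n" "A \<in> sets (PiM {..<k} (\<lambda>_. borel))"
  shows "(\<integral>\<^sup>+ v. lowest_indicator n k A v \<partial>PiM {..<n} (\<lambda>_. uniform01))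
       = (\<integral>\<^sup>+ x. prefix_indicator n k A x * emeasure uniform01 {x (k - 1)..} ^ (n - k)
             \<partial>PiM {..<k} (\<lambda>_. uniform01))"
proof -
  interpret U: product_sigma_finite "\<lambda>_::nat. uniform01"
    using prob_space_uniform01 by (simp add: product_sigma_finite_def prob_space_imp_sigma_finite)
  have split: "{..<n} = {..<k} \<union> {k..<n}" using assms by auto
  have merge: "lowest_indicator n k A (merge {..<k} {k..<n} (x, y))
      = prefix_indicator n k A x * (\<Prod>j\<in>{k..<n}. indicator {x (k - 1)..} (y j))" for x y
  proof -
    have "scaled_increments (real n) k (merge {..<k} {k..<n} (x, y)) = scaled_increments (real n) k x"
      by (intro scaled_increments_cong) (simp add: merge_def)
    moreover have "lowest_sorted n k (merge {..<k} {k..<n} (x, y))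
        \<longleftrightarrow> sorted_prefix k x \<and> (\<forall>j\<in>{k..<n}. y j \<in> {x (k - 1)..})"
      using assms by (auto simp: lowest_sorted_def sorted_prefix_def merge_def)
    ultimately show ?thesis
      by (simp add: lowest_indicator_def prefix_indicator_def prod_indicator_eq_if)
  qed
  have "(\<integral>\<^sup>+ v. lowest_indicator n k A v \<partial>PiM {..<n} (\<lambda>_. uniform01))
      = (\<integral>\<^sup>+ x. (\<integral>\<^sup>+ y. lowest_indicator n k A (merge {..<k} {k..<n} (x, y))
           \<partial>PiM {k..<n} (\<lambda>_. uniform01)) \<partial>PiM {..<k} (\<lambda>_. uniform01))"
    using lowest_indicator_measurable[OF assms] unfolding split
    by (intro U.product_nn_integral_fold) auto
  also have "\<dots> = (\<integral>\<^sup>+ x. prefix_indicator n k A x * emeasure uniform01 {x (k - 1)..} ^ (n - k)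
      \<partial>PiM {..<k} (\<lambda>_. uniform01))"
  proof (intro nn_integral_cong)
    fix x :: "nat \<Rightarrow> real"
    have "(\<integral>\<^sup>+ y. (\<Prod>j\<in>{k..<n}. indicator {x (k - 1)..} (y j)) \<partial>PiM {k..<n} (\<lambda>_. uniform01))
        = emeasure uniform01 {x (k - 1)..} ^ (n - k)"
      by (subst U.product_nn_integral_prod) simp_all
    then show "(\<integral>\<^sup>+ y. lowest_indicator n k A (merge {..<k} {k..<n} (x, y)) \<partial>PiM {k..<n} (\<lambda>_. uniform01))
        = prefix_indicator n k A x * emeasure uniform01 {x (k - 1)..} ^ (n - k)"
      unfolding merge by (subst nn_integral_cmult) simp_all
  qed
  finally show ?thesis .
qed

lemma prefix_indicator_tail_le:
  assumes "1 \<le> k" "k < n"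
  shows "(\<Prod>i<k. indicator {0..1} (x i))
           * (prefix_indicator n k A x * emeasure uniform01 {x (k - 1)..} ^ (n - k))
         \<le> ennreal ((1 - real k / real n) ^ (n - k) * exp (real k))
           * (indicator A (scaled_increments (real n) k x)
              * (\<Prod>j<k. ennreal (exponential_density 1 (scaled_increments (real n) k x j))))"
    (is "?lhs \<le> ennreal ?K * ?rhs")
proof (cases "(\<forall>i<k. x i \<in> {0..1}) \<and> sorted_prefix k x \<and> scaled_increments (real n) k x \<in> A")
  case False
  then have "?lhs = 0"
    by (auto simp: prefix_indicator_def prod_indicator_eq_if)
  then show ?thesis by (simp only: zero_le)
next
  case True
  define c where "c = x (k - 1)"
  have c: "0 \<le> c" "c \<le> 1" using True assms by (auto simp: c_def)
  have n: "real n > 0" using assms by simp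
  have lhs: "?lhs = ennreal ((1 - c) ^ (n - k))"
    using True c unfolding c_def[symmetric] by (simp add: prefix_indicator_def prod_indicator_eq_if emeasure_uniform01_atLeast
        ennreal_power)
  have rhs: "?rhs = ennreal (exp (- real n * c))"
  proof -
    let ?y = "scaled_increments (real n) k x"
    have "?y j \<ge> 0" if "j < k" for j
      using True that by (cases j) (auto simp: scaled_increments_def sorted_prefix_def)
    then have "(\<Prod>j<k. ennreal (exponential_density 1 (?y j))) = (\<Prod>j<k. ennreal (exp (- ?y j)))"
      by (intro prod.cong) (auto simp: exponential_density_def not_less)
    also have "\<dots> = ennreal (exp (- (\<Sum>j<k. ?y j)))"
      by (simp add: prod_ennreal exp_sum flip: sum_negf)
    also have "(\<Sum>j<k. ?y j) = real n * c"
      using assms(1) by (cases k) (simp_all only: sum_scaled_increments c_def, simp_all)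
    finally show ?thesis
      using True by simp
  qed
  have "(1 - c) ^ (n - k) \<le> ?K * exp (- real n * c)"
    using one_minus_pow_le_exp[OF assms(2), of "real n * c"] c n
    by (simp add: exp_diff exp_minus field_simps mult_le_one)
  moreover have "0 \<le> ?K"
    using assms by (simp add: field_simps)
  ultimately show ?thesis
    unfolding lhs rhs by (simp add: ennreal_leI flip: ennreal_mult)
qed

lemma nn_integral_prefix_indicator_le:
  assumes "1 \<le> k" "k < n" and A: "A \<in> sets (PiM {..<k} (\<lambda>_. borel))"
  shows "(\<integral>\<^sup>+ x. prefix_indicator n k A x * emeasure uniform01 {x (k - 1)..} ^ (n - k)
            \<partial>PiM {..<k} (\<lambda>_. uniform01))
         \<le> ennreal ((1 / real n) ^ k) * (ennreal ((1 - real k / real n) ^ (n - k) * exp (real k))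
             * emeasure (P_exp k) A)"
proof -
  let ?L = "PiM {..<k} (\<lambda>_. lborel :: real measure)"
  let ?K = "(1 - real k / real n) ^ (n - k) * exp (real k)"
  define G where "G y = indicator A y * (\<Prod>j<k. ennreal (exponential_density 1 (y j)))" for y
  have [measurable]: "A \<in> sets ?L" "k - 1 \<in> {..<k}"
    using A assms(1) by (simp_all cong: sets_PiM_cong)
  note [measurable] = prefix_indicator_measurable[OF A, of n]
  have G[measurable]: "G \<in> borel_measurable ?L"
    unfolding G_def by measurable
  have "(\<integral>\<^sup>+ x. prefix_indicator n k A x * emeasure uniform01 {x (k - 1)..} ^ (n - k)
          \<partial>PiM {..<k} (\<lambda>_. uniform01))
      = (\<integral>\<^sup>+ x. (\<Prod>i<k. indicator {0..1} (x i))
          * (prefix_indicator n k A x * emeasure uniform01 {x (k - 1)..} ^ (n - k)) \<partial>?L)"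
    unfolding PiM_uniform01_eq_density emeasure_uniform01_atLeast
    by (rule nn_integral_density) measurable
  also have "\<dots> \<le> (\<integral>\<^sup>+ x. ennreal ?K * G (scaled_increments (real n) k x) \<partial>?L)"
    unfolding G_def by (intro nn_integral_mono prefix_indicator_tail_le assms(1,2))
  also have "\<dots> = ennreal ((1 / real n) ^ k) * (\<integral>\<^sup>+ y. ennreal ?K * G y \<partial>?L)"
    using assms by (intro nn_integral_scaled_increments) simp_all
  also have "(\<integral>\<^sup>+ y. ennreal ?K * G y \<partial>?L) = ennreal ?K * (\<integral>\<^sup>+ y. G y \<partial>?L)"
    by (rule nn_integral_cmult) (rule G)
  also have "(\<integral>\<^sup>+ y. G y \<partial>?L) = emeasure (P_exp k) A"
    unfolding P_exp_eq_density G_def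
    by (subst emeasure_density) (auto simp: mult.commute intro!: nn_integral_cong)
  finally show ?thesis .
qed

lemma emeasure_Q_dist_le:
  assumes "1 \<le> k" "k < n" and A: "A \<in> sets (P_exp k)"
  shows "emeasure (Q_dist n k) A \<le> ennreal (density_ratio_const n k) * emeasure (P_exp k) A"
proof -
  let ?U = "PiM {..<n} (\<lambda>_. uniform01)"
  let ?T = "index_tuples n k"
  have A': "A \<in> sets (PiM {..<k} (\<lambda>_. borel))" using A by (simp add: sets_P_exp)
  have kn: "k \<le> n" using assms by simp
  have "emeasure (Q_dist n k) A = (\<integral>\<^sup>+ y. indicator A y \<partial>Q_dist n k)"
    using A' by (simp add: sets_Q_dist)
  also have "\<dots> = (\<integral>\<^sup>+ u. indicator A (Y_spacings n k u) \<partial>?U)"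
    unfolding Q_dist_def using A' by (intro nn_integral_distr Y_spacings_measurable) simp
  also have "\<dots> \<le> (\<integral>\<^sup>+ u. (\<Sum>t\<in>?T. lowest_indicator n k A (permute_coords n t u)) \<partial>?U)"
    by (intro nn_integral_mono indicator_Y_spacings_le_sum assms(1) kn)
  also have "\<dots> = (\<Sum>t\<in>?T. \<integral>\<^sup>+ u. lowest_indicator n k A (permute_coords n t u) \<partial>?U)"
  proof (rule nn_integral_sum)
    fix t assume "t \<in> ?T"
    from measurable_comp[OF permute_coords_measurable[OF this] lowest_indicator_measurable[OF assms(1) kn A']]
    show "(\<lambda>u. lowest_indicator n k A (permute_coords n t u)) \<in> borel_measurable ?U"
      by (simp add: comp_def)
  qed
  also have "\<dots> = of_nat (card ?T) * (\<integral>\<^sup>+ v. lowest_indicator n k A v \<partial>?U)"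
    using lowest_indicator_measurable[OF assms(1) kn A']
    by (simp add: nn_integral_permute_coords[OF _ prob_space_uniform01])
  also have "\<dots> \<le> of_nat (card ?T) * (ennreal ((1 / real n) ^ k)
      * (ennreal ((1 - real k / real n) ^ (n - k) * exp (real k)) * emeasure (P_exp k) A))"
    unfolding nn_integral_lowest_indicator[OF assms(1) kn A']
    by (intro mult_left_mono nn_integral_prefix_indicator_le assms(1,2) A') simp
  also have "\<dots> = ennreal (density_ratio_const n k) * emeasure (P_exp k) A"
  proof -
    have "density_ratio_const n k
        = real (card ?T) * ((1 / real n) ^ k * ((1 - real k / real n) ^ (n - k) * exp (real k)))"
      by (simp add: density_ratio_const_def card_index_tuples kn field_simps)
    moreover have "0 \<le> (1 - real k / real n) ^ (n - k)"
      using assms(2) by (intro zero_le_power) simp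
    ultimately show ?thesis
      by (simp add: ennreal_mult mult.assoc ennreal_of_nat_eq_real_of_nat)
  qed
  finally show ?thesis .
qed

lemma emeasure_Q_dist_le_const:
  assumes "1 \<le> k" "k < n" "density_ratio_const n k \<le> c" "A \<in> sets (P_exp k)"
  shows "emeasure (Q_dist n k) A \<le> ennreal c * emeasure (P_exp k) A"
proof -
  have "emeasure (Q_dist n k) A \<le> ennreal (density_ratio_const n k) * emeasure (P_exp k) A"
    using assms(1,2,4) by (rule emeasure_Q_dist_le)
  also have "\<dots> \<le> ennreal c * emeasure (P_exp k) A"
    using assms(3) by (intro mult_right_mono ennreal_leI) simp_all
  finally show ?thesis .
qed

theorem corollary7:
  fixes n k :: nat
  assumes "1 \<le> k" and "k < n"
  shows "(k = 1 \<longrightarrow> ratio_sup (Q_dist n k) (P_exp k)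
             \<le> ennreal (exp (1 / (2 * real n) + 1 / (4 * real n ^ 2))))
       \<and> ratio_sup (Q_dist n k) (P_exp k) \<le> ennreal ((1 - real k / real n) powr (-1/2))
       \<and> (k = 1 \<longrightarrow> dTV (Q_dist n k) (P_exp k) \<le> 1 / (2 * real n) + 1 / (4 * real n ^ 2))
       \<and> dTV (Q_dist n k) (P_exp k) \<le> 1 - sqrt (1 - real k / real n)
       \<and> 1 - sqrt (1 - real k / real n) < real k / (2 * real n - real k)"
proof (intro conjI impI)
  have sets: "sets (Q_dist n k) = sets (P_exp k)"
    by (simp add: sets_Q_dist sets_P_exp)
  note ratio = ratio_sup_le[OF emeasure_Q_dist_le_const[OF assms]]
  note total_variation = dTV_le[OF prob_space_Q_dist prob_space_P_exp sets emeasure_Q_dist_le_const[OF assms]]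
  define t where "t = 1 - real k / real n"
  have t: "0 < t" using assms by (simp add: t_def)
  note general = density_ratio_const_le_powr[OF assms(2)]
  show "ratio_sup (Q_dist n k) (P_exp k) \<le> ennreal ((1 - real k / real n) powr (-1/2))"
    by (rule ratio[OF general])
  have "1 / t powr (-1/2) = sqrt t"
    using t by (simp add: powr_minus_divide powr_half_sqrt)
  then show "dTV (Q_dist n k) (P_exp k) \<le> 1 - sqrt (1 - real k / real n)"
    using total_variation[OF general] by (simp add: t_def)
  have "real k / real n / (2 - real k / real n) = real k / (2 * real n - real k)"
    using assms by (simp add: divide_simps)
  then show "1 - sqrt (1 - real k / real n) < real k / (2 * real n - real k)"
    using one_minus_sqrt_one_minus_less[of "real k / real n"] assms by simp
  define x where "x = 1 / (2 * real n) + 1 / (4 * real n ^ 2)"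
  assume "k = 1"
  then have one: "density_ratio_const n k \<le> exp x"
    using assms density_ratio_const_one_le[of n] by (simp add: x_def)
  show "ratio_sup (Q_dist n k) (P_exp k) \<le> ennreal (exp (1 / (2 * real n) + 1 / (4 * real n ^ 2)))"
    using ratio[OF one] by (simp add: x_def)
  have "1 - 1 / exp x \<le> x"
    using exp_ge_add_one_self[of "- x"] by (simp add: exp_minus field_simps)
  then show "dTV (Q_dist n k) (P_exp k) \<le> 1 / (2 * real n) + 1 / (4 * real n ^ 2)"
    using total_variation[OF one] by (simp add: x_def)
qed

end
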